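(* Let $n\ge1$, $\rho=2n+1$, and let $\nu$ be an integer with $\nu>\rho-2$. Define on $\mathbb R$ \[ \mathbf b_\nu(\lambda)=\begin{cases}\mathbf c_\nu(\lambda)&\text{if }\frac{\nu-\rho+2}2\in\mathbb Z^+,\\ \lambda\,\mathbf c_\nu(\lambda)&\text{if }\frac{\nu-\rho+2}2\notin\mathbb Z^+,\end{cases} \] where $\mathbf c_\nu(\lambda)=2^{\rho-i\lambda}\frac{\Gamma(\rho-1)\Gamma(i\lambda)}{\Gamma(\frac{i\lambda+\nu+\rho}2)\Gamma(\frac{i\lambda+\rho-\nu-2}2)}$ (extended by continuity at $\lambda=0$). Then (i) $\mathbf b_\nu$ has no zero in $\mathbb R$; (ii) there exists $C>0$ such that for all $\lambda\in\mathbb R$, \[ C^{-1}(1+\lambda^2)^{\frac{2\rho-4-\varepsilon(\nu)}4}\le|\mathbf b_\nu(\lambda)|^{-1}\le C(1+\lambda^2)^{\frac{2\rho-4-\varepsilon(\nu)}4}, \] where $\varepsilon(\nu)=1$ if $\frac{\nu-\rho+2}2\notin\mathbb Z^+$ and $\varepsilon(\nu)=-1$ if $\frac{\nu-\rho+2}2\in\mathbb Z^+$.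
   Context: $\mathbb Z^+$ denotes the set of nonnegative integers (under the hypothesis $\nu>\rho-2$ this is equivalent to positive integers here). *)

theory Defs
  imports "HOL-Analysis.Analysis"
begin

definition half_shift_nonneg_int :: "nat \<Rightarrow> int \<Rightarrow> bool" where
  "half_shift_nonneg_int rho nu \<longleftrightarrow> (\<exists>k::nat. nu - int rho + 2 = 2 * int k)"

text \<open>The raw formula c_nu(lambda); meaningful (no poles) for real lambda \<noteq> 0.\<close>
definition c_raw :: "nat \<Rightarrow> int \<Rightarrow> real \<Rightarrow> complex" where
  "c_raw rho nu lam =
     (2::complex) powr (of_nat rho - \<i> * of_real lam) *
     (Gamma (of_nat rho - 1) * Gamma (\<i> * of_real lam)) /
     (Gamma ((\<i> * of_real lam + of_int nu + of_nat rho) / 2) *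
      Gamma ((\<i> * of_real lam + of_nat rho - of_int nu - 2) / 2))"

definition b_raw :: "nat \<Rightarrow> int \<Rightarrow> real \<Rightarrow> complex" where
  "b_raw rho nu lam =
     (if half_shift_nonneg_int rho nu then c_raw rho nu lam
      else of_real lam * c_raw rho nu lam)"

definition b_fun :: "nat \<Rightarrow> int \<Rightarrow> real \<Rightarrow> complex" where
  "b_fun rho nu lam =
     (if lam = 0 then Lim (at (0::real)) (b_raw rho nu) else b_raw rho nu lam)"

definition eps_nu :: "nat \<Rightarrow> int \<Rightarrow> real" where
  "eps_nu rho nu = (if half_shift_nonneg_int rho nu then -1 else 1)"

end

theory Submission
  imports Defs
begin

(* With z = i lambda / 2, Legendre's duplication formula turns c_nu(lambda) into
   2^(rho-1) Gamma(rho-1) / sqrt pi * Gamma(z) Gamma(z+1/2) / (Gamma(z+(nu+rho)/2) Gamma(z+(rho-nu-2)/2)).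
   As nu > rho - 2, write nu = 2n+2p-1 or nu = 2n+2p: the Gamma quotients collapse to Pochhammer
   symbols, and b_nu becomes a constant times (Gamma(1+z) / Gamma(1/2+z))^(-1), resp. ^(+1), times
   a ratio of Pochhammer symbols (for even nu the factor lambda absorbs the pole of Gamma(z) at 0).
   This closed form is continuous and zero-free on the real line, so it also gives b_nu(0).
   The reflection formula yields |Gamma(1+iy) / Gamma(1/2+iy)|^2 = y coth(pi y), comparable to
   (1+y^2)^(1/2), and |(c+iy)_k| is comparable to (1+y^2)^(k/2) when no c+j vanishes; adding up
   the exponents gives the two-sided bound. *)

definition comparable_powr :: "(real \<Rightarrow> real) \<Rightarrow> real \<Rightarrow> bool" where
  "comparable_powr f e \<longleftrightarrow>
     (\<exists>C>0. \<forall>x. inverse C * (1 + x^2) powr e \<le> f x \<and> f x \<le> C * (1 + x^2) powr e)"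

lemma one_add_power2_pos [simp]: "(0::real) < 1 + x^2"
  and one_add_power2_neq_zero [simp]: "(1::real) + x^2 \<noteq> 0"
  by (simp_all add: add_pos_nonneg add_nonneg_eq_0_iff)

lemma comparable_powr_pos:
  assumes "comparable_powr f e"
  shows "f x > 0"
proof -
  obtain C where "C > 0" "inverse C * (1 + x^2) powr e \<le> f x"
    using assms unfolding comparable_powr_def by blast
  moreover have "inverse C * (1 + x^2) powr e > 0"
    using \<open>C > 0\<close> by simp
  ultimately show ?thesis by linarith
qed

lemma comparable_powr_weight: "comparable_powr (\<lambda>x. (1 + x^2) powr e) e"
  unfolding comparable_powr_def by (intro exI[of _ 1]) simp

lemma comparable_powr_within_factor:
  assumes "comparable_powr g e" and "D > 0"
    and "\<And>x. inverse D * g x \<le> f x" and "\<And>x. f x \<le> D * g x"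
  shows "comparable_powr f e"
proof -
  obtain C where C: "C > 0"
    "\<And>x. inverse C * (1 + x^2) powr e \<le> g x" "\<And>x. g x \<le> C * (1 + x^2) powr e"
    using assms(1) unfolding comparable_powr_def by blast
  show ?thesis
    unfolding comparable_powr_def
  proof (intro exI[of _ "D * C"] conjI allI)
    fix x
    have "inverse (D * C) * (1 + x^2) powr e = inverse D * (inverse C * (1 + x^2) powr e)"
      by simp
    also have "\<dots> \<le> inverse D * g x"
      using C(2) \<open>D > 0\<close> by (intro mult_left_mono) auto
    finally show "inverse (D * C) * (1 + x^2) powr e \<le> f x"
      using assms(3) by (rule order_trans)
    have "D * g x \<le> D * (C * (1 + x^2) powr e)"
      using C(3) \<open>D > 0\<close> by (intro mult_left_mono) auto
    then show "f x \<le> D * C * (1 + x^2) powr e"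
      using assms(4)[of x] by simp
  qed (use C(1) \<open>D > 0\<close> in simp)
qed

lemma comparable_powr_const:
  assumes "c > 0"
  shows "comparable_powr (\<lambda>x. c) 0"
proof (rule comparable_powr_within_factor[OF comparable_powr_weight, of "c + inverse c"])
  show "inverse (c + inverse c) * (1 + x^2) powr 0 \<le> c" for x
    using assms by (simp add: field_simps add_pos_nonneg)
qed (use assms in \<open>simp_all add: add_pos_pos\<close>)

lemma comparable_powr_mult:
  assumes "comparable_powr f a" and "comparable_powr g b"
  shows "comparable_powr (\<lambda>x. f x * g x) (a + b)"
proof -
  obtain C where C: "C > 0"
    "\<And>x. inverse C * (1 + x^2) powr a \<le> f x" "\<And>x. f x \<le> C * (1 + x^2) powr a"
    using assms(1) unfolding comparable_powr_def by blast
  obtain D where D: "D > 0"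
    "\<And>x. inverse D * (1 + x^2) powr b \<le> g x" "\<And>x. g x \<le> D * (1 + x^2) powr b"
    using assms(2) unfolding comparable_powr_def by blast
  show ?thesis
    unfolding comparable_powr_def
  proof (intro exI[of _ "C * D"] conjI allI)
    fix x
    have split: "(1 + x^2) powr (a + b) = (1 + x^2) powr a * (1 + x^2) powr b"
      by (simp add: powr_add)
    have "inverse (C * D) * (1 + x^2) powr (a + b) =
        (inverse C * (1 + x^2) powr a) * (inverse D * (1 + x^2) powr b)"
      by (simp add: split)
    also have "\<dots> \<le> f x * g x"
      using C D comparable_powr_pos[OF assms(1)] by (intro mult_mono) (auto simp: less_imp_le)
    finally show "inverse (C * D) * (1 + x^2) powr (a + b) \<le> f x * g x" .
    have "f x * g x \<le> (C * (1 + x^2) powr a) * (D * (1 + x^2) powr b)"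
      using C D comparable_powr_pos[OF assms(1)] comparable_powr_pos[OF assms(2)]
      by (intro mult_mono) (auto simp: less_imp_le)
    also have "\<dots> = C * D * (1 + x^2) powr (a + b)"
      by (simp add: split)
    finally show "f x * g x \<le> C * D * (1 + x^2) powr (a + b)" .
  qed (use C D in simp)
qed

lemma comparable_powr_inverse:
  assumes "comparable_powr f a"
  shows "comparable_powr (\<lambda>x. inverse (f x)) (- a)"
proof -
  obtain C where C: "C > 0"
    "\<And>x. inverse C * (1 + x^2) powr a \<le> f x" "\<And>x. f x \<le> C * (1 + x^2) powr a"
    using assms unfolding comparable_powr_def by blast
  show ?thesis
    unfolding comparable_powr_def
  proof (intro exI[of _ C] conjI allI)
    fix x
    have w: "(1 + x^2) powr a > 0" "(1 + x^2) powr (- a) = inverse ((1 + x^2) powr a)"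
      by (simp_all add: powr_minus)
    have "inverse C * (1 + x^2) powr a > 0"
      using C(1) w by simp
    then show "inverse (f x) \<le> C * (1 + x^2) powr (- a)"
      using le_imp_inverse_le[OF C(2)] C(1) w by (simp add: mult.commute)
    show "inverse C * (1 + x^2) powr (- a) \<le> inverse (f x)"
      using le_imp_inverse_le[OF C(3) comparable_powr_pos[OF assms]] w by (simp add: mult.commute)
  qed (use C in simp)
qed

lemma comparable_powr_sqrt:
  assumes "comparable_powr f a"
  shows "comparable_powr (\<lambda>x. sqrt (f x)) (a / 2)"
proof -
  obtain C where C: "C > 0"
    "\<And>x. inverse C * (1 + x^2) powr a \<le> f x" "\<And>x. f x \<le> C * (1 + x^2) powr a"
    using assms unfolding comparable_powr_def by blast
  show ?thesis
    unfolding comparable_powr_def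
  proof (intro exI[of _ "sqrt C"] conjI allI)
    fix x
    have w: "sqrt ((1 + x^2) powr a) = (1 + x^2) powr (a / 2)"
      by (simp add: powr_half_sqrt[symmetric] powr_powr)
    have "inverse (sqrt C) * (1 + x^2) powr (a / 2) = sqrt (inverse C * (1 + x^2) powr a)"
      by (simp add: real_sqrt_mult real_sqrt_inverse w)
    also have "\<dots> \<le> sqrt (f x)"
      using C(2)[of x] by simp
    finally show "inverse (sqrt C) * (1 + x^2) powr (a / 2) \<le> sqrt (f x)" .
    have "sqrt (f x) \<le> sqrt (C * (1 + x^2) powr a)"
      using C(3)[of x] by simp
    also have "\<dots> = sqrt C * (1 + x^2) powr (a / 2)"
      by (simp add: real_sqrt_mult w)
    finally show "sqrt (f x) \<le> sqrt C * (1 + x^2) powr (a / 2)" .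
  qed (use C in simp)
qed

lemma comparable_powr_add_square:
  fixes d :: real
  assumes "d \<noteq> 0"
  shows "comparable_powr (\<lambda>y. d^2 + y^2) 1"
proof (rule comparable_powr_within_factor[OF comparable_powr_weight])
  define D where "D = 1 + d^2 + inverse (d^2)"
  have D: "1 \<le> D" "d^2 \<le> D" "inverse (d^2) \<le> D"
    unfolding D_def by simp_all
  have "inverse D \<le> 1"
    using le_imp_inverse_le[OF D(1)] by simp
  have "inverse D \<le> d^2"
    using le_imp_inverse_le[OF D(3)] assms by simp
  show "D > 0" using D by simp
  fix y :: real
  show "inverse D * (1 + y^2) powr 1 \<le> d^2 + y^2"
    using \<open>inverse D \<le> d^2\<close> mult_right_mono[OF \<open>inverse D \<le> 1\<close>, of "y^2"]
    by (simp add: distrib_left)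
  show "d^2 + y^2 \<le> D * (1 + y^2) powr 1"
    using D mult_right_mono[OF \<open>1 \<le> D\<close>, of "y^2"] by (simp add: distrib_left)
qed

lemma comparable_powr_one_plus_abs: "comparable_powr (\<lambda>y. 1 + \<bar>y\<bar>) (1/2)"
proof (rule comparable_powr_within_factor[OF comparable_powr_weight, of 2])
  fix y :: real
  have "sqrt (1 + y^2) \<le> 1 + \<bar>y\<bar>"
    by (rule real_le_lsqrt) (auto simp: power2_eq_square algebra_simps)
  then show "inverse 2 * (1 + y^2) powr (1/2) \<le> 1 + \<bar>y\<bar>"
    by (simp add: powr_half_sqrt)
  have "2 * \<bar>y\<bar> \<le> 1 + y^2"
    using sum_squares_bound[of 1 "\<bar>y\<bar>"] by simp
  then have "((1 + \<bar>y\<bar>) / 2)^2 \<le> 1 + y^2"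
    by (simp add: power2_eq_square field_simps)
  then have "(1 + \<bar>y\<bar>) / 2 \<le> sqrt (1 + y^2)"
    by (rule real_le_rsqrt)
  then show "1 + \<bar>y\<bar> \<le> 2 * (1 + y^2) powr (1/2)"
    by (simp add: powr_half_sqrt)
qed simp

lemma powr_le_powr_abs_mult:
  fixes u v B e :: real
  assumes "0 < u" "0 < v" "u \<le> B * v" "v \<le> B * u"
  shows "u powr e \<le> B powr \<bar>e\<bar> * v powr e"
proof -
  have "B > 0" using assms by (metis mult_pos_pos zero_less_mult_pos2 order_less_le_trans)
  show ?thesis
  proof (cases "e \<ge> 0")
    case True
    have "u powr e \<le> (B * v) powr e"
      using assms True by (intro powr_mono2) auto
    then show ?thesis
      using True \<open>B > 0\<close> assms by (simp add: powr_mult)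
  next
    case False
    have "u powr e \<le> (v / B) powr e"
      using assms False \<open>B > 0\<close> by (intro powr_mono2') (auto simp: field_simps)
    also have "(v / B) powr e = B powr \<bar>e\<bar> * v powr e"
      using False \<open>B > 0\<close> assms by (simp add: powr_divide powr_minus_divide)
    finally show ?thesis .
  qed
qed

lemma comparable_powr_scale:
  assumes f: "comparable_powr f e" and "a \<noteq> 0"
  shows "comparable_powr (\<lambda>x. f (a * x)) e"
proof -
  define B where "B = 1 + a^2 + inverse (a^2)"
  have "1 \<le> B" "a^2 \<le> B"
    unfolding B_def by simp_all
  have "1 \<le> B * a^2"
    unfolding B_def using \<open>a \<noteq> 0\<close> by (simp add: distrib_right)
  have B: "1 + (a * x)^2 \<le> B * (1 + x^2)" "1 + x^2 \<le> B * (1 + (a * x)^2)" for x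
    using \<open>1 \<le> B\<close> mult_right_mono[OF \<open>a^2 \<le> B\<close>, of "x^2"]
      mult_right_mono[OF \<open>1 \<le> B * a^2\<close>, of "x^2"]
    by (simp_all add: distrib_left power_mult_distrib mult.assoc)
  have "comparable_powr (\<lambda>x. (1 + (a * x)^2) powr e) e"
  proof (rule comparable_powr_within_factor[OF comparable_powr_weight, of "B powr \<bar>e\<bar>"])
    fix x
    show "(1 + (a * x)^2) powr e \<le> B powr \<bar>e\<bar> * (1 + x^2) powr e"
      using B by (intro powr_le_powr_abs_mult) auto
    have "(1 + x^2) powr e \<le> B powr \<bar>e\<bar> * (1 + (a * x)^2) powr e"
      using B by (intro powr_le_powr_abs_mult) auto
    then show "inverse (B powr \<bar>e\<bar>) * (1 + x^2) powr e \<le> (1 + (a * x)^2) powr e"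
      using \<open>1 \<le> B\<close> by (simp add: field_simps)
  qed (use \<open>1 \<le> B\<close> in simp)
  moreover obtain C where "C > 0"
    "\<And>x. inverse C * (1 + x^2) powr e \<le> f x" "\<And>x. f x \<le> C * (1 + x^2) powr e"
    using f unfolding comparable_powr_def by blast
  ultimately show ?thesis
    by (rule comparable_powr_within_factor)
qed

lemma sinh_le_mult_cosh:
  fixes t :: real
  assumes "0 \<le> t"
  shows "sinh t \<le> t * cosh t"
proof -
  have "(\<lambda>s. s * cosh s - sinh s) 0 \<le> (\<lambda>s. s * cosh s - sinh s) t"
  proof (rule DERIV_nonneg_imp_nondecreasing[OF assms])
    fix s :: real
    assume "0 \<le> s"
    have "((\<lambda>s. s * cosh s - sinh s) has_real_derivative s * sinh s) (at s)"
      by (auto intro!: derivative_eq_intros)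
    then show "\<exists>y. ((\<lambda>s. s * cosh s - sinh s) has_real_derivative y) (at s) \<and> 0 \<le> y"
      using \<open>0 \<le> s\<close> by auto
  qed
  then show ?thesis by simp
qed

lemma mult_cosh_le_sinh:
  fixes t :: real
  assumes "0 \<le> t"
  shows "t * cosh t \<le> (1 + t) * sinh t"
proof -
  have "(1 + t) * sinh t - t * cosh t = exp (- t) * (exp t * exp t - 1 - 2 * t) / 2"
    by (simp add: cosh_def sinh_def exp_minus field_simps)
  moreover have "1 + 2 * t \<le> exp t * exp t"
    using exp_ge_add_one_self[of "2 * t"] by (simp add: exp_add[symmetric])
  then have "0 \<le> exp (- t) * (exp t * exp t - 1 - 2 * t)"
    by simp
  ultimately show ?thesis by linarith
qed

lemma mult_cosh_div_sinh_bounds: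
  fixes t :: real
  assumes "t \<noteq> 0"
  shows "max 1 \<bar>t\<bar> \<le> t * cosh t / sinh t" and "t * cosh t / sinh t \<le> 1 + \<bar>t\<bar>"
proof -
  define s where "s = \<bar>t\<bar>"
  have "0 < s" "0 < sinh s"
    using assms unfolding s_def by simp_all
  have even: "t * cosh t / sinh t = s * cosh s / sinh s"
    unfolding s_def by (cases "t \<ge> 0") simp_all
  have "sinh s \<le> s * cosh s" "s * sinh s \<le> s * cosh s" "s * cosh s \<le> (1 + s) * sinh s"
    using \<open>0 < s\<close> by (simp_all add: sinh_le_mult_cosh sinh_le_cosh_real mult_cosh_le_sinh)
  with \<open>0 < sinh s\<close>
  show "max 1 \<bar>t\<bar> \<le> t * cosh t / sinh t" and "t * cosh t / sinh t \<le> 1 + \<bar>t\<bar>"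
    unfolding even s_def[symmetric] by (simp_all add: field_simps)
qed

lemma sin_ii_of_real: "sin (\<i> * complex_of_real t) = \<i> * of_real (sinh t)"
  by (simp add: sin_i_times sinh_def exp_of_real exp_minus)

lemma cos_ii_of_real: "cos (\<i> * complex_of_real t) = of_real (cosh t)"
  by (simp add: cos_i_times cosh_def exp_of_real exp_minus)

lemma not_nonpos_Ints_if_Re_pos_or_Im_nonzero:
  fixes z :: complex
  assumes "0 < Re z \<or> Im z \<noteq> 0"
  shows "z \<notin> \<int>\<^sub>\<le>\<^sub>0"
  using assms nonpos_Ints_subset_nonpos_Reals by (auto simp: complex_nonpos_Reals_iff)

lemma Gamma_ii_nonzero:
  "Gamma (1 + \<i> * of_real y) \<noteq> 0" "Gamma (1/2 + \<i> * of_real y) \<noteq> 0"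
  by (simp_all add: Gamma_eq_zero_iff not_nonpos_Ints_if_Re_pos_or_Im_nonzero)

lemma Gamma_of_nat_nonzero:
  assumes "m > 0"
  shows "Gamma (of_nat m :: complex) \<noteq> 0"
  unfolding Gamma_eq_zero_iff of_nat_in_nonpos_Ints_iff using assms by simp

lemma norm_Gamma_half_plus_ii_sq:
  "norm (Gamma (1/2 + \<i> * of_real y))^2 = pi / cosh (pi * y)"
proof -
  let ?w = "1/2 + \<i> * complex_of_real y"
  have "cnj (Gamma ?w) = Gamma (1 - ?w)"
    by (simp add: cnj_Gamma)
  then have "complex_of_real (norm (Gamma ?w)^2) = Gamma ?w * Gamma (1 - ?w)"
    by (simp only: complex_norm_square)
  also have "\<dots> = of_real pi / sin (of_real pi * ?w)"
    by (rule Gamma_reflection_complex)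
  also have "of_real pi * ?w = of_real (pi / 2) + \<i> * of_real (pi * y)"
    by (simp add: algebra_simps)
  also have "sin \<dots> = of_real (cosh (pi * y))"
    by (simp add: sin_add cos_ii_of_real del: of_real_mult)
  finally show ?thesis
    unfolding of_real_divide[symmetric] of_real_eq_iff .
qed

lemma norm_Gamma_one_plus_ii_sq:
  assumes "y \<noteq> 0"
  shows "norm (Gamma (1 + \<i> * of_real y))^2 = pi * y / sinh (pi * y)"
proof -
  let ?w = "\<i> * complex_of_real y"
  have "?w \<notin> \<int>\<^sub>\<le>\<^sub>0"
    using assms by (intro not_nonpos_Ints_if_Re_pos_or_Im_nonzero) simp
  then have "Gamma (1 + ?w) = ?w * Gamma ?w"
    using Gamma_plus1[of ?w] by (simp add: add.commute)
  moreover have "cnj (Gamma (1 + ?w)) = Gamma (1 - ?w)"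
    by (simp add: cnj_Gamma)
  ultimately have "complex_of_real (norm (Gamma (1 + ?w))^2) = ?w * (Gamma ?w * Gamma (1 - ?w))"
    by (simp only: complex_norm_square mult.assoc)
  also have "\<dots> = ?w * (of_real pi / sin (of_real pi * ?w))"
    by (simp add: Gamma_reflection_complex)
  also have "of_real pi * ?w = \<i> * of_real (pi * y)"
    by simp
  also have "sin \<dots> = \<i> * of_real (sinh (pi * y))"
    by (rule sin_ii_of_real)
  also have "?w * (of_real pi / (\<i> * of_real (sinh (pi * y)))) = of_real (pi * y / sinh (pi * y))"
    by (simp add: field_simps)
  finally show ?thesis
    unfolding of_real_eq_iff .
qed

lemma Gamma_ii_ratio_sq_bounds:
  fixes y :: real
  defines "q \<equiv> (norm (Gamma (1 + \<i> * of_real y)) / norm (Gamma (1/2 + \<i> * of_real y)))^2"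
  shows "max 1 (pi * \<bar>y\<bar>) \<le> pi * q" and "pi * q \<le> 1 + pi * \<bar>y\<bar>"
proof -
  have "max 1 (pi * \<bar>y\<bar>) \<le> pi * q \<and> pi * q \<le> 1 + pi * \<bar>y\<bar>"
  proof (cases "y = 0")
    case True
    then have "pi * q = 1"
      using norm_Gamma_half_plus_ii_sq[of 0] by (simp add: q_def power_divide)
    with True show ?thesis
      by simp
  next
    case False
    then have q: "pi * q = (pi * y) * cosh (pi * y) / sinh (pi * y)"
      unfolding q_def power_divide norm_Gamma_one_plus_ii_sq[OF False] norm_Gamma_half_plus_ii_sq
      by (simp add: field_simps)
    from False have "pi * y \<noteq> 0"
      by simp
    from mult_cosh_div_sinh_bounds[OF this] show ?thesis
      unfolding q abs_mult by simp
  qed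
  then show "max 1 (pi * \<bar>y\<bar>) \<le> pi * q" and "pi * q \<le> 1 + pi * \<bar>y\<bar>"
    by simp_all
qed

lemma comparable_powr_Gamma_ii_ratio:
  "comparable_powr
     (\<lambda>y. norm (Gamma (1 + \<i> * of_real y)) / norm (Gamma (1/2 + \<i> * of_real y))) (1/4)"
proof -
  let ?R = "\<lambda>y. norm (Gamma (1 + \<i> * of_real y)) / norm (Gamma (1/2 + \<i> * of_real y))"
  have "comparable_powr (\<lambda>y. (?R y)^2) (1/2)"
  proof (rule comparable_powr_within_factor[OF comparable_powr_one_plus_abs, of "2 * pi"])
    fix y :: real
    define q where "q = (?R y)^2"
    have "1 * \<bar>y\<bar> \<le> pi * \<bar>y\<bar>"
      using pi_ge_two by (intro mult_right_mono) auto
    then have "1 + \<bar>y\<bar> \<le> 2 * (pi * q)"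
      using Gamma_ii_ratio_sq_bounds(1)[of y] unfolding q_def by linarith
    then show "inverse (2 * pi) * (1 + \<bar>y\<bar>) \<le> (?R y)^2"
      unfolding q_def[symmetric] by (simp add: field_simps)
    have "pi * q \<le> pi * (1 + \<bar>y\<bar>)"
      using Gamma_ii_ratio_sq_bounds(2)[of y] pi_ge_two unfolding q_def by (simp add: algebra_simps)
    moreover have "1 * (1 + \<bar>y\<bar>) \<le> (2 * pi) * (1 + \<bar>y\<bar>)"
      using pi_ge_two by (intro mult_right_mono) auto
    ultimately show "(?R y)^2 \<le> 2 * pi * (1 + \<bar>y\<bar>)"
      unfolding q_def[symmetric] by simp
  qed simp
  from comparable_powr_sqrt[OF this] show ?thesis
    by simp
qed

lemma comparable_powr_pochhammer_ii:
  assumes "\<forall>j<k. c + real j \<noteq> 0"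
  shows "comparable_powr (\<lambda>y. norm (pochhammer (of_real c + \<i> * of_real y) k)) (k / 2)"
  using assms
proof (induction k)
  case 0
  show ?case
    using comparable_powr_const[of 1] by simp
next
  case (Suc k)
  have "norm (of_real c + \<i> * of_real y + of_nat k :: complex) = sqrt ((c + real k)^2 + y^2)" for y
    by (simp add: cmod_def)
  then have "norm (pochhammer (of_real c + \<i> * of_real y) (Suc k)) =
      norm (pochhammer (of_real c + \<i> * of_real y) k) * sqrt ((c + real k)^2 + y^2)" for y
    by (simp only: pochhammer_Suc norm_mult)
  moreover have "comparable_powr (\<lambda>y. norm (pochhammer (of_real c + \<i> * of_real y) k) *
      sqrt ((c + real k)^2 + y^2)) (k / 2 + 1 / 2)"
    using Suc by (intro comparable_powr_mult comparable_powr_sqrt comparable_powr_add_square) auto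
  ultimately show ?case
    by (simp add: add_divide_distrib add.commute)
qed

lemma isCont_pochhammer' [continuous_intros]:
  fixes f :: "'a::t2_space \<Rightarrow> 'b::real_normed_field"
  shows "isCont f z \<Longrightarrow> isCont (\<lambda>x. pochhammer (f x) n) z"
  by (rule isCont_o2[OF _ isCont_pochhammer])

lemma pochhammer_ii_nonzero:
  assumes "\<forall>j<k. c + real j \<noteq> 0"
  shows "pochhammer (of_real c + \<i> * of_real y) k \<noteq> 0"
  using comparable_powr_pos[OF comparable_powr_pochhammer_ii[OF assms], of y] by auto

lemma c_raw_duplication:
  fixes y :: real
  assumes "y \<noteq> 0"
  defines "z \<equiv> \<i> * complex_of_real y"
  shows "c_raw rho nu (2 * y) =
    2 ^ rho * Gamma (of_nat rho - 1) / (2 * of_real (sqrt pi)) * Gamma z * Gamma (z + 1/2) /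
    (Gamma (z + (of_int nu + of_nat rho) / 2) * Gamma (z + (of_nat rho - of_int nu - 2) / 2))"
proof -
  let ?L = "complex_of_real (ln 2)"
  have "z \<notin> \<int>\<^sub>\<le>\<^sub>0" "z + 1/2 \<notin> \<int>\<^sub>\<le>\<^sub>0"
    using assms by (auto intro!: not_nonpos_Ints_if_Re_pos_or_Im_nonzero)
  then have dup: "Gamma (2 * z) = Gamma z * Gamma (z + 1/2) / (exp ((1 - 2 * z) * ?L) * of_real (sqrt pi))"
    using Gamma_legendre_duplication by (simp add: field_simps)
  have "Ln (2::complex) = ?L"
    using Ln_of_real[of 2] by simp
  then have "(2::complex) powr (of_nat rho - 2 * z) = exp (of_nat rho * ?L - ?L + (1 - 2 * z) * ?L)"
    by (simp add: powr_def algebra_simps)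
  also have "\<dots> = 2 ^ rho / 2 * exp ((1 - 2 * z) * ?L)"
    by (simp add: exp_add exp_diff exp_of_nat_mult exp_of_real)
  finally have pw: "(2::complex) powr (of_nat rho - 2 * z) = 2 ^ rho / 2 * exp ((1 - 2 * z) * ?L)" .
  have arg: "\<i> * complex_of_real (2 * y) = 2 * z"
    unfolding z_def by simp
  show ?thesis
    unfolding c_raw_def arg pw dup by (simp add: field_simps)
qed

(* Closed forms of b_nu(2y) for rho = 2n+1 and nu = 2n+2p-1 resp. nu = 2n+2p. *)
definition b_closed_odd :: "nat \<Rightarrow> nat \<Rightarrow> real \<Rightarrow> complex" where
  "b_closed_odd n p y =
     2 ^ (2 * n) * Gamma (of_nat (2 * n)) / of_real (sqrt pi) *
     Gamma (1/2 + \<i> * of_real y) * pochhammer (\<i> * of_real y - of_nat p) p /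
     (Gamma (1 + \<i> * of_real y) * pochhammer (1 + \<i> * of_real y) (2 * n + p - 1))"

definition b_closed_even :: "nat \<Rightarrow> nat \<Rightarrow> real \<Rightarrow> complex" where
  "b_closed_even n p y =
     - 2 * \<i> * 2 ^ (2 * n) * Gamma (of_nat (2 * n)) / of_real (sqrt pi) *
     Gamma (1 + \<i> * of_real y) * pochhammer (\<i> * of_real y - 1/2 - of_nat p) (Suc p) /
     (Gamma (1/2 + \<i> * of_real y) * pochhammer (1/2 + \<i> * of_real y) (2 * n + p))"

lemma c_raw_odd_eq:
  assumes "n \<ge> 1" and "y \<noteq> 0"
  shows "c_raw (2 * n + 1) (2 * int n + 2 * int p - 1) (2 * y) = b_closed_odd n p y"
proof -
  define z where "z = \<i> * complex_of_real y"
  let ?K = "2 ^ (2 * n) * Gamma (of_nat (2 * n)) / of_real (sqrt pi) :: complex"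
  have "z - of_nat p \<notin> \<int>\<^sub>\<le>\<^sub>0" "1 + z \<notin> \<int>\<^sub>\<le>\<^sub>0"
    "z + of_nat (2 * n + p) \<notin> \<int>\<^sub>\<le>\<^sub>0"
    using assms(2) unfolding z_def by (auto intro!: not_nonpos_Ints_if_Re_pos_or_Im_nonzero)
  note not_pole = this
  then have nonzero: "Gamma (z - of_nat p) \<noteq> 0" "Gamma (1 + z) \<noteq> 0"
    "Gamma (z + of_nat (2 * n + p)) \<noteq> 0"
    by (simp_all add: Gamma_eq_zero_iff)
  have low: "Gamma z = pochhammer (z - of_nat p) p * Gamma (z - of_nat p)"
    using pochhammer_Gamma[OF not_pole(1), of p] nonzero(1) by (simp add: field_simps)
  have "1 + z + of_nat (2 * n + p - 1) = z + of_nat (2 * n + p)"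
    using assms(1) by (simp add: of_nat_diff)
  with pochhammer_Gamma[OF not_pole(2), of "2 * n + p - 1"]
  have "pochhammer (1 + z) (2 * n + p - 1) = Gamma (z + of_nat (2 * n + p)) / Gamma (1 + z)"
    by (simp only:)
  then have high: "Gamma (z + of_nat (2 * n + p)) = Gamma (1 + z) * pochhammer (1 + z) (2 * n + p - 1)"
    using nonzero(2) by (simp add: field_simps)
  have "(of_int (2 * int n + 2 * int p - 1) + of_nat (2 * n + 1)) / 2 = (of_nat (2 * n + p) :: complex)"
    "(of_nat (2 * n + 1) - of_int (2 * int n + 2 * int p - 1) - 2) / 2 = - (of_nat p :: complex)"
    "(2::complex) ^ (2 * n + 1) * Gamma (of_nat (2 * n + 1) - 1) / (2 * of_real (sqrt pi)) = ?K"
    by (simp_all add: field_simps)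
  note args = this
  have "c_raw (2 * n + 1) (2 * int n + 2 * int p - 1) (2 * y) =
      ?K * Gamma z * Gamma (z + 1/2) / (Gamma (z + of_nat (2 * n + p)) * Gamma (z - of_nat p))"
    unfolding c_raw_duplication[OF assms(2)] z_def[symmetric] args by (simp only: add_uminus_conv_diff)
  also have "\<dots> = ?K * (pochhammer (z - of_nat p) p * Gamma (z - of_nat p)) * Gamma (1/2 + z) /
      ((Gamma (1 + z) * pochhammer (1 + z) (2 * n + p - 1)) * Gamma (z - of_nat p))"
    unfolding low high add.commute[of z "1/2"] ..
  also have "\<dots> = b_closed_odd n p y"
    unfolding b_closed_odd_def z_def[symmetric] using nonzero(1) by (simp add: field_simps)
  finally show ?thesis .
qed

lemma c_raw_even_eq:
  assumes "y \<noteq> 0"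
  shows "of_real (2 * y) * c_raw (2 * n + 1) (2 * int n + 2 * int p) (2 * y) = b_closed_even n p y"
proof -
  define z where "z = \<i> * complex_of_real y"
  define w where "w = z - 1/2 - of_nat p"
  let ?K = "2 ^ (2 * n) * Gamma (of_nat (2 * n)) / of_real (sqrt pi) :: complex"
  have "z \<notin> \<int>\<^sub>\<le>\<^sub>0" "w \<notin> \<int>\<^sub>\<le>\<^sub>0" "1/2 + z \<notin> \<int>\<^sub>\<le>\<^sub>0"
    "z + (1/2 + of_nat (2 * n + p)) \<notin> \<int>\<^sub>\<le>\<^sub>0"
    using assms unfolding z_def w_def by (auto intro!: not_nonpos_Ints_if_Re_pos_or_Im_nonzero)
  note not_pole = this
  then have nonzero: "Gamma w \<noteq> 0" "Gamma (1/2 + z) \<noteq> 0"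
    "Gamma (z + (1/2 + of_nat (2 * n + p))) \<noteq> 0"
    by (simp_all add: Gamma_eq_zero_iff)
  have linear: "of_real (2 * y) * Gamma z = - 2 * \<i> * Gamma (1 + z)"
    using Gamma_plus1[OF not_pole(1)] by (simp add: z_def add.commute)
  have "w + of_nat (Suc p) = z + 1/2"
    unfolding w_def by simp
  with pochhammer_Gamma[OF not_pole(2), of "Suc p"]
  have "pochhammer w (Suc p) = Gamma (z + 1/2) / Gamma w"
    by (simp only:)
  then have low: "Gamma (z + 1/2) = pochhammer w (Suc p) * Gamma w"
    using nonzero(1) by (simp add: field_simps)
  have "1/2 + z + of_nat (2 * n + p) = z + (1/2 + of_nat (2 * n + p))"
    by (simp add: ac_simps)
  with pochhammer_Gamma[OF not_pole(3), of "2 * n + p"]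
  have "pochhammer (1/2 + z) (2 * n + p) = Gamma (z + (1/2 + of_nat (2 * n + p))) / Gamma (1/2 + z)"
    by (simp only:)
  then have high:
    "Gamma (z + (1/2 + of_nat (2 * n + p))) = Gamma (1/2 + z) * pochhammer (1/2 + z) (2 * n + p)"
    using nonzero(2) by (simp add: field_simps)
  have "(of_int (2 * int n + 2 * int p) + of_nat (2 * n + 1)) / 2 = 1/2 + (of_nat (2 * n + p) :: complex)"
    "(of_nat (2 * n + 1) - of_int (2 * int n + 2 * int p) - 2) / 2 = - 1/2 - (of_nat p :: complex)"
    "(2::complex) ^ (2 * n + 1) * Gamma (of_nat (2 * n + 1) - 1) / (2 * of_real (sqrt pi)) = ?K"
    by (simp_all add: field_simps)
  note args = this
  have "c_raw (2 * n + 1) (2 * int n + 2 * int p) (2 * y) =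
      ?K * Gamma z * Gamma (z + 1/2) / (Gamma (z + (1/2 + of_nat (2 * n + p))) * Gamma w)"
    unfolding c_raw_duplication[OF assms] z_def[symmetric] args by (simp add: w_def algebra_simps)
  also have "\<dots> = ?K * Gamma z * (pochhammer w (Suc p) * Gamma w) /
      ((Gamma (1/2 + z) * pochhammer (1/2 + z) (2 * n + p)) * Gamma w)"
    unfolding low high ..
  finally have "of_real (2 * y) * c_raw (2 * n + 1) (2 * int n + 2 * int p) (2 * y) =
      ?K * (of_real (2 * y) * Gamma z) * pochhammer w (Suc p) /
      (Gamma (1/2 + z) * pochhammer (1/2 + z) (2 * n + p))"
    using nonzero(1) by (simp add: field_simps)
  also have "\<dots> = b_closed_even n p y"
    unfolding linear b_closed_even_def z_def[symmetric] w_def by (simp add: field_simps)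
  finally show ?thesis .
qed

lemma comparable_powr_b_closed_odd:
  assumes "n \<ge> 1"
  shows "comparable_powr (\<lambda>y. norm (b_closed_odd n p y)) (1/4 - n)"
proof -
  let ?k = "norm (2 ^ (2 * n) * Gamma (of_nat (2 * n)) / of_real (sqrt pi) :: complex)"
  let ?R = "\<lambda>y. norm (Gamma (1 + \<i> * of_real y)) / norm (Gamma (1/2 + \<i> * of_real y))"
  have "Gamma (of_nat (2 * n) :: complex) \<noteq> 0"
    using assms by (intro Gamma_of_nat_nonzero) simp
  then have "?k > 0"
    by simp
  have "of_real (- real p) + \<i> * of_real y = \<i> * of_real y - of_nat p" for y
    by simp
  then have eq: "?k * (inverse (?R y) *
      (norm (pochhammer (of_real (- real p) + \<i> * of_real y) p) *
       inverse (norm (pochhammer (of_real 1 + \<i> * of_real y) (2 * n + p - 1))))) =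
      norm (b_closed_odd n p y)" for y
    unfolding b_closed_odd_def using Gamma_ii_nonzero[of y]
    by (simp add: norm_mult norm_divide field_simps)
  have e: "0 + (- (1/4) + (real p / 2 + - (real (2 * n + p - 1) / 2))) = 1/4 - real n"
    using assms by (simp add: of_nat_diff field_simps)
  have "comparable_powr (\<lambda>y. ?k * (inverse (?R y) *
      (norm (pochhammer (of_real (- real p) + \<i> * of_real y) p) *
       inverse (norm (pochhammer (of_real 1 + \<i> * of_real y) (2 * n + p - 1))))))
    (0 + (- (1/4) + (real p / 2 + - (real (2 * n + p - 1) / 2))))"
    using \<open>?k > 0\<close>
    by (intro comparable_powr_mult comparable_powr_const comparable_powr_inverse
        comparable_powr_Gamma_ii_ratio comparable_powr_pochhammer_ii) auto
  then show ?thesis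
    unfolding eq e .
qed

lemma comparable_powr_b_closed_even:
  assumes "n \<ge> 1"
  shows "comparable_powr (\<lambda>y. norm (b_closed_even n p y)) (3/4 - n)"
proof -
  let ?k = "norm (- 2 * \<i> * 2 ^ (2 * n) * Gamma (of_nat (2 * n)) / of_real (sqrt pi) :: complex)"
  let ?R = "\<lambda>y. norm (Gamma (1 + \<i> * of_real y)) / norm (Gamma (1/2 + \<i> * of_real y))"
  have "Gamma (of_nat (2 * n) :: complex) \<noteq> 0"
    using assms by (intro Gamma_of_nat_nonzero) simp
  then have "?k > 0"
    by (simp add: norm_mult)
  have factors_nonzero: "\<forall>j<Suc p. - 1/2 - real p + real j \<noteq> 0"
  proof (intro allI impI notI)
    fix j
    assume "- 1/2 - real p + real j = 0"
    then have "real (2 * j) = real (2 * p + 1)"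
      by simp
    then have "2 * j = 2 * p + 1"
      by (simp only: of_nat_eq_iff)
    then show False
      by presburger
  qed
  have "of_real (- 1/2 - real p) + \<i> * of_real y = \<i> * of_real y - 1/2 - of_nat p" for y
    by simp
  then have eq: "?k * (?R y *
      (norm (pochhammer (of_real (- 1/2 - real p) + \<i> * of_real y) (Suc p)) *
       inverse (norm (pochhammer (of_real (1/2) + \<i> * of_real y) (2 * n + p))))) =
      norm (b_closed_even n p y)" for y
    unfolding b_closed_even_def using Gamma_ii_nonzero[of y]
    by (simp add: norm_mult norm_divide field_simps)
  have e: "0 + (1/4 + (real (Suc p) / 2 + - (real (2 * n + p) / 2))) = 3/4 - real n"
    by (simp add: field_simps)
  have "comparable_powr (\<lambda>y. ?k * (?R y *
      (norm (pochhammer (of_real (- 1/2 - real p) + \<i> * of_real y) (Suc p)) *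
       inverse (norm (pochhammer (of_real (1/2) + \<i> * of_real y) (2 * n + p))))))
    (0 + (1/4 + (real (Suc p) / 2 + - (real (2 * n + p) / 2))))"
    using \<open>?k > 0\<close> factors_nonzero
    by (intro comparable_powr_mult comparable_powr_const comparable_powr_inverse
        comparable_powr_Gamma_ii_ratio comparable_powr_pochhammer_ii) auto
  then show ?thesis
    unfolding eq e .
qed

lemma isCont_b_closed_odd: "isCont (b_closed_odd n p) y"
  using Gamma_ii_nonzero[of y] pochhammer_ii_nonzero[of "2 * n + p - 1" 1 y]
  unfolding b_closed_odd_def
  by (intro continuous_intros) (auto simp: not_nonpos_Ints_if_Re_pos_or_Im_nonzero)

lemma isCont_b_closed_even: "isCont (b_closed_even n p) y"
  using Gamma_ii_nonzero[of y] pochhammer_ii_nonzero[of "2 * n + p" "1/2" y]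
  unfolding b_closed_even_def
  by (intro continuous_intros) (auto simp: not_nonpos_Ints_if_Re_pos_or_Im_nonzero)

lemma b_fun_eqI:
  assumes "\<And>x. x \<noteq> 0 \<Longrightarrow> b_raw rho nu x = G x" and "isCont G 0"
  shows "b_fun rho nu x = G x"
proof (cases "x = 0")
  case True
  have "eventually (\<lambda>x. G x = b_raw rho nu x) (at 0)"
    using assms(1) by (auto simp: eventually_at_filter)
  with assms(2) have "(b_raw rho nu \<longlongrightarrow> G 0) (at 0)"
    by (simp add: isCont_def tendsto_cong)
  then show ?thesis
    using True by (simp add: b_fun_def tendsto_Lim[OF trivial_limit_at])
qed (simp add: b_fun_def assms(1))

lemma b_fun_odd_eq:
  assumes "n \<ge> 1"
  shows "b_fun (2 * n + 1) (2 * int n + 2 * int p - 1) x = b_closed_odd n p (x / 2)"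
proof (rule b_fun_eqI)
  have "half_shift_nonneg_int (2 * n + 1) (2 * int n + 2 * int p - 1)"
    unfolding half_shift_nonneg_int_def by (intro exI[of _ p]) simp
  then show "b_raw (2 * n + 1) (2 * int n + 2 * int p - 1) x = b_closed_odd n p (x / 2)"
    if "x \<noteq> 0" for x
    using c_raw_odd_eq[OF assms, of "x / 2" p] that by (simp add: b_raw_def)
  show "isCont (\<lambda>x. b_closed_odd n p (x / 2)) 0"
    by (intro isCont_o2[OF _ isCont_b_closed_odd] continuous_intros) simp
qed

lemma b_fun_even_eq:
  "b_fun (2 * n + 1) (2 * int n + 2 * int p) x = b_closed_even n p (x / 2)"
proof (rule b_fun_eqI)
  have "\<not> half_shift_nonneg_int (2 * n + 1) (2 * int n + 2 * int p)"
    unfolding half_shift_nonneg_int_def by presburger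
  then show "b_raw (2 * n + 1) (2 * int n + 2 * int p) x = b_closed_even n p (x / 2)"
    if "x \<noteq> 0" for x
    using c_raw_even_eq[of "x / 2" n p] that by (simp add: b_raw_def)
  show "isCont (\<lambda>x. b_closed_even n p (x / 2)) 0"
    by (intro isCont_o2[OF _ isCont_b_closed_even] continuous_intros) simp
qed

lemma comparable_powr_norm_b_fun:
  fixes n rho :: nat and nu :: int
  assumes "n \<ge> 1" and "rho = 2 * n + 1" and "nu > int rho - 2"
  shows "comparable_powr (\<lambda>x. norm (b_fun rho nu x)) (- ((2 * real rho - 4 - eps_nu rho nu) / 4))"
proof -
  have "\<exists>p::nat. nu = 2 * int n + 2 * int p - 1 \<or> nu = 2 * int n + 2 * int p"
    using assms(2,3) by presburger
  then obtain p :: nat where "nu = 2 * int n + 2 * int p - 1 \<or> nu = 2 * int n + 2 * int p"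
    by blast
  then show ?thesis
  proof
    assume nu: "nu = 2 * int n + 2 * int p - 1"
    have "half_shift_nonneg_int rho nu"
      unfolding half_shift_nonneg_int_def assms(2) nu by (intro exI[of _ p]) simp
    then have "- ((2 * real rho - 4 - eps_nu rho nu) / 4) = 1/4 - real n"
      using assms(2) by (simp add: eps_nu_def field_simps)
    moreover have "comparable_powr (\<lambda>x. norm (b_closed_odd n p ((1/2) * x))) (1/4 - n)"
      by (rule comparable_powr_scale[OF comparable_powr_b_closed_odd[OF assms(1)]]) simp
    ultimately show ?thesis
      using b_fun_odd_eq[OF assms(1)] unfolding assms(2) nu by simp
  next
    assume nu: "nu = 2 * int n + 2 * int p"
    have "\<not> half_shift_nonneg_int rho nu"
      unfolding half_shift_nonneg_int_def assms(2) nu by presburger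
    then have "- ((2 * real rho - 4 - eps_nu rho nu) / 4) = 3/4 - real n"
      using assms(2) by (simp add: eps_nu_def field_simps)
    moreover have "comparable_powr (\<lambda>x. norm (b_closed_even n p ((1/2) * x))) (3/4 - n)"
      by (rule comparable_powr_scale[OF comparable_powr_b_closed_even[OF assms(1)]]) simp
    ultimately show ?thesis
      using b_fun_even_eq unfolding assms(2) nu by simp
  qed
qed

theorem mainTheorem7:
  fixes n rho :: nat and nu :: int
  assumes "n \<ge> 1" and "rho = 2 * n + 1" and "nu > int rho - 2"
  shows "(\<forall>lam::real. b_fun rho nu lam \<noteq> 0) \<and>
    (\<exists>C::real. C > 0 \<and> (\<forall>lam::real.
       inverse C * (1 + lam^2) powr ((2 * real rho - 4 - eps_nu rho nu) / 4)
         \<le> inverse (norm (b_fun rho nu lam)) \<and>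
       inverse (norm (b_fun rho nu lam))
         \<le> C * (1 + lam^2) powr ((2 * real rho - 4 - eps_nu rho nu) / 4)))"
proof -
  note comparable = comparable_powr_norm_b_fun[OF assms]
  have "b_fun rho nu lam \<noteq> 0" for lam
    using comparable_powr_pos[OF comparable, of lam] by auto
  moreover have "comparable_powr (\<lambda>x. inverse (norm (b_fun rho nu x)))
      ((2 * real rho - 4 - eps_nu rho nu) / 4)"
    using comparable_powr_inverse[OF comparable] by simp
  ultimately show ?thesis
    unfolding comparable_powr_def by blast
qed

end
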